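(* Let $G$ be a finite group and let $p,q$ be distinct primes dividing $|G|$. Let $m,n$ be positive integers and suppose that $|G| = p^i q^n$ for some integer $i$ with $1 \le i \le m$. If $p \nmid q^n - 1$ and $q \nmid p^{\gcd([m],\, q-1)} - 1$, then $G$ has an abelian subgroup of order $pq$.
   Context: For a positive integer $m$, $[m]$ denotes the least common multiple of $1,2,\dots,m$, i.e. $[m] = \operatorname{lcm}(1,2,\dots,m)$. $\gcd(a,b)$ denotes the greatest common divisor. *)

theory Defs
  imports "HOL-Algebra.Algebra"
begin

text \<open>[m] = lcm(1,2,...,m)\<close>
definition lcm_upto :: "nat \<Rightarrow> nat" where
  "lcm_upto m = Lcm {1..m}"

end

(* Let Q be a Sylow q-subgroup and N its normalizer. Letting Q act on its right cosets, the
   fixed cosets are those inside N, so p^i = |G : Q| == |N : Q| = p^j (mod q). Then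
   p^(i-j) == 1 (mod q), and the order of p modulo q divides both i - j <= m and q - 1,
   hence gcd([m], q - 1); the hypothesis on q forces j = i, i.e. Q is normal.
   A Sylow p-subgroup P then acts on Q by conjugation, and q^n = |Q| == |C_Q(P)| (mod p) with
   p not dividing q^n - 1 yields some y /= 1 in Q centralising P. Powers of y and of any
   x /= 1 in P are commuting elements of orders q and p; their product generates a cyclic
   subgroup of order pq. *)

theory Submission
  imports Defs "HOL-Number_Theory.Number_Theory"
begin

lemma group_actionI:
  assumes K: "group K"
    and ext: "\<And>g. g \<in> carrier K \<Longrightarrow> \<phi> g \<in> extensional E"
    and closed: "\<And>g x. g \<in> carrier K \<Longrightarrow> x \<in> E \<Longrightarrow> \<phi> g x \<in> E"
    and one: "\<And>x. x \<in> E \<Longrightarrow> \<phi> \<one>\<^bsub>K\<^esub> x = x"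
    and mult: "\<And>g h x. g \<in> carrier K \<Longrightarrow> h \<in> carrier K \<Longrightarrow> x \<in> E \<Longrightarrow>
                 \<phi> (g \<otimes>\<^bsub>K\<^esub> h) x = \<phi> g (\<phi> h x)"
  shows "group_action K E \<phi>"
proof -
  interpret K: group K by fact
  have bij: "\<phi> g \<in> Bij E" if g: "g \<in> carrier K" for g
  proof -
    have cancel: "\<phi> h (\<phi> (inv\<^bsub>K\<^esub> h) x) = x" if "h \<in> carrier K" "x \<in> E" for h x
      using mult[of h "inv\<^bsub>K\<^esub> h" x] one that by simp
    have "bij_betw (\<phi> g) E E"
    proof (rule bij_betw_byWitness)
      show "\<forall>x\<in>E. \<phi> (inv\<^bsub>K\<^esub> g) (\<phi> g x) = x"
        using cancel[of "inv\<^bsub>K\<^esub> g"] g by simp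
      show "\<forall>x\<in>E. \<phi> g (\<phi> (inv\<^bsub>K\<^esub> g) x) = x"
        using cancel g by simp
    qed (use closed g in auto)
    then show ?thesis
      using ext g unfolding Bij_def by simp
  qed
  have "\<phi> (g \<otimes>\<^bsub>K\<^esub> h) = compose E (\<phi> g) (\<phi> h)"
    if "g \<in> carrier K" "h \<in> carrier K" for g h
    using mult[OF that] ext[of "g \<otimes>\<^bsub>K\<^esub> h"] that
    by (auto simp: compose_def extensional_def)
  then have "\<phi> \<in> hom K (BijGroup E)"
    unfolding hom_def BijGroup_def using bij by auto
  then show ?thesis
    unfolding group_action_def group_hom_def group_hom_axioms_def
    using K group_BijGroup by blast
qed

lemma group_action_restrict:
  assumes act: "group_action K E \<phi>" and sub: "F \<subseteq> E"
    and invariant: "\<And>g x. g \<in> carrier K \<Longrightarrow> x \<in> F \<Longrightarrow> \<phi> g x \<in> F"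
  shows "group_action K F (\<lambda>g. restrict (\<phi> g) F)"
proof -
  interpret group_action K E \<phi> by fact
  have "group K"
    using group_hom group_hom.axioms(1) by blast
  then show ?thesis
  proof (rule group_actionI)
    show "restrict (\<phi> \<one>\<^bsub>K\<^esub>) F x = x" if "x \<in> F" for x
      using id_eq_one[symmetric] sub that by (auto dest: fun_cong[of _ _ x])
  qed (use invariant sub composition_rule in auto)
qed

lemma (in group_action) orbit_eq_singleton_iff:
  assumes x: "x \<in> E"
  shows "orbit G \<phi> x = {x} \<longleftrightarrow> (\<forall>g\<in>carrier G. \<phi> g x = x)"
proof
  assume "orbit G \<phi> x = {x}"
  then show "\<forall>g\<in>carrier G. \<phi> g x = x"
    unfolding orbit_def by blast
next
  assume "\<forall>g\<in>carrier G. \<phi> g x = x"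
  then have "orbit G \<phi> x \<subseteq> {x}"
    unfolding orbit_def by auto
  then show "orbit G \<phi> x = {x}"
    using orbit_refl[OF x] by blast
qed

lemma (in group_action) card_cong_fixed_points:
  assumes fin: "finite E" and r: "Factorial_Ring.prime r" and ord: "order G = r ^ k"
  shows "[card E = card {x \<in> E. \<forall>g\<in>carrier G. \<phi> g x = x}] (mod r)"
proof -
  define F where "F = {x \<in> E. \<forall>g\<in>carrier G. \<phi> g x = x}"
  define Orbs where "Orbs = orbits G E \<phi>"
  define O1 where "O1 = {C \<in> Orbs. card C = 1}"
  have card_orbit: "card (orbit G \<phi> x) = 1 \<or> r dvd card (orbit G \<phi> x)" if "x \<in> E" for x
  proof -
    have "card (orbit G \<phi> x) dvd r ^ k"
      using orbit_stabilizer_theorem[OF that] ord by (metis dvd_triv_left)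
    then obtain j where "card (orbit G \<phi> x) = r ^ j"
      using divides_primepow_nat[OF r] by blast
    then show ?thesis by (cases j) auto
  qed
  have "O1 = (\<lambda>x. {x}) ` F"
  proof (intro equalityI subsetI)
    fix C assume "C \<in> O1"
    then obtain x where x: "x \<in> E" "C = orbit G \<phi> x" "card C = 1"
      unfolding O1_def Orbs_def orbits_def by blast
    then have "C = {x}"
      using orbit_refl[OF x(1)] by (metis card_1_singletonE singletonD)
    then show "C \<in> (\<lambda>x. {x}) ` F"
      using x orbit_eq_singleton_iff unfolding F_def by blast
  next
    fix C assume "C \<in> (\<lambda>x. {x}) ` F"
    then obtain x where "x \<in> F" "C = {x}" by blast
    then show "C \<in> O1"
      using orbit_eq_singleton_iff unfolding O1_def Orbs_def orbits_def F_def by force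
  qed
  then have card_O1: "(\<Sum>C\<in>O1. card C) = card F"
    by (simp add: sum.reindex inj_on_def)
  have "Orbs \<subseteq> Pow E"
    using element_image unfolding Orbs_def orbits_def orbit_def by blast
  then have "finite Orbs"
    using fin finite_subset by blast
  moreover have "card E = (\<Sum>C\<in>Orbs. card C)"
    using disjoint_sum[OF fin, of "\<lambda>_. 1"] unfolding Orbs_def card_eq_sum[abs_def] by (rule sym)
  ultimately have "card E = (\<Sum>C\<in>Orbs - O1. card C) + card F"
    using sum.subset_diff[of O1 Orbs card] card_O1 unfolding O1_def by simp
  moreover have "r dvd card C" if "C \<in> Orbs - O1" for C
    using that card_orbit unfolding O1_def Orbs_def orbits_def by blast
  then obtain t where "(\<Sum>C\<in>Orbs - O1. card C) = r * t"
    using dvd_sum by blast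
  ultimately show ?thesis
    unfolding F_def by (simp add: cong_def)
qed

text \<open>Right multiplication by \<open>inv g\<close>, which makes the right regular action a left one.\<close>
lemma (in group) rcoset_action:
  assumes "subgroup H G"
  shows "group_action G (rcosets H) (\<lambda>g. \<lambda>C\<in>rcosets H. C #> inv g)"
proof -
  have H: "H \<subseteq> carrier G"
    using assms subgroup.subset by blast
  have coset_sub: "C \<subseteq> carrier G" if "C \<in> rcosets H" for C
    using that H r_coset_subset_G unfolding RCOSETS_def by blast
  have coset_closed: "C #> g \<in> rcosets H" if C: "C \<in> rcosets H" and g: "g \<in> carrier G" for C g
  proof -
    obtain a where a: "a \<in> carrier G" "C = H #> a"
      using C unfolding RCOSETS_def by blast
    then have "C #> g = H #> (a \<otimes> g)"
      using coset_mult_assoc H g by simp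
    then show ?thesis
      using rcosetsI H a g by simp
  qed
  show ?thesis
  proof (rule group_actionI[OF is_group])
    show "(\<lambda>C\<in>rcosets H. C #> inv (g \<otimes> h)) C
            = (\<lambda>C\<in>rcosets H. C #> inv g) ((\<lambda>C\<in>rcosets H. C #> inv h) C)"
      if "g \<in> carrier G" "h \<in> carrier G" "C \<in> rcosets H" for g h C
      using that coset_closed coset_sub by (simp add: coset_mult_assoc inv_mult_group)
  qed (use coset_closed coset_sub in auto)
qed

lemma (in group) normalizer_iff_conj_closed:
  assumes H: "subgroup H G" "finite H" and a: "a \<in> carrier G"
  shows "a \<in> normalizer G H \<longleftrightarrow> (\<forall>h\<in>H. a \<otimes> h \<otimes> inv a \<in> H)"
proof -
  let ?conj = "\<lambda>h. a \<otimes> h \<otimes> inv a"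
  have Hc: "H \<subseteq> carrier G"
    using H(1) subgroup.subset by blast
  have "a <# H #> inv a = ?conj ` H"
    unfolding l_coset_def r_coset_def by auto
  then have "a \<in> normalizer G H \<longleftrightarrow> ?conj ` H = H"
    unfolding normalizer_def stabilizer_def using a Hc by simp
  also have "\<dots> \<longleftrightarrow> ?conj ` H \<subseteq> H"
  proof
    assume "?conj ` H \<subseteq> H"
    moreover have "inj_on ?conj H"
    proof (rule inj_onI)
      fix x y assume "x \<in> H" "y \<in> H" "?conj x = ?conj y"
      then show "x = y"
        using a Hc by (metis inv_closed l_cancel m_closed r_cancel subsetD)
    qed
    ultimately show "?conj ` H = H"
      using endo_inj_surj[OF H(2)] by blast
  qed simp
  finally show ?thesis by blast
qed

lemma (in group) subgroup_subset_normalizer: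
  assumes "subgroup H G" "finite H"
  shows "H \<subseteq> normalizer G H"
proof
  fix h assume h: "h \<in> H"
  then have "\<forall>y\<in>H. h \<otimes> y \<otimes> inv h \<in> H"
    using assms(1) by (simp add: subgroup.m_closed subgroup.m_inv_closed)
  then show "h \<in> normalizer G H"
    using normalizer_iff_conj_closed[OF assms subgroup.mem_carrier[OF assms(1) h]] by blast
qed

lemma (in group) rcoset_fixed_iff_normalizer:
  assumes H: "subgroup H G" "finite H" and a: "a \<in> carrier G"
  shows "(\<forall>g\<in>H. H #> a #> inv g = H #> a) \<longleftrightarrow> a \<in> normalizer G H"
proof -
  have Hc: "H \<subseteq> carrier G"
    using H(1) subgroup.subset by blast
  have fixed_iff: "H #> a #> inv g = H #> a \<longleftrightarrow> a \<otimes> inv g \<otimes> inv a \<in> H"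
    if "g \<in> H" for g
  proof -
    have g: "inv g \<in> carrier G"
      using that Hc by auto
    have ag: "a \<otimes> inv g \<in> carrier G"
      using a g by simp
    have "H #> a #> inv g = H #> a \<longleftrightarrow> H #> a = H #> (a \<otimes> inv g)"
      using coset_mult_assoc[OF Hc a g] by auto
    also have "\<dots> \<longleftrightarrow> a \<otimes> inv g \<in> H #> a"
      using repr_independence[OF _ a H(1)] repr_independenceD[OF H(1) ag] by blast
    also have "\<dots> \<longleftrightarrow> a \<otimes> inv g \<otimes> inv a \<in> H"
      using subgroup.rcos_module[OF H(1) is_group a ag] .
    finally show ?thesis .
  qed
  have "(\<forall>g\<in>H. a \<otimes> inv g \<otimes> inv a \<in> H) \<longleftrightarrow> (\<forall>h\<in>H. a \<otimes> h \<otimes> inv a \<in> H)"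
  proof
    assume inv_closed: "\<forall>g\<in>H. a \<otimes> inv g \<otimes> inv a \<in> H"
    show "\<forall>h\<in>H. a \<otimes> h \<otimes> inv a \<in> H"
    proof
      fix h assume h: "h \<in> H"
      then have "a \<otimes> inv (inv h) \<otimes> inv a \<in> H"
        using inv_closed subgroup.m_inv_closed[OF H(1)] by blast
      then show "a \<otimes> h \<otimes> inv a \<in> H"
        using h Hc by (simp add: subsetD)
    qed
  qed (use subgroup.m_inv_closed[OF H(1)] in blast)
  then show ?thesis
    using fixed_iff normalizer_iff_conj_closed[OF H a] by simp
qed

lemma (in group) card_fixed_rcosets:
  assumes H: "subgroup H G" and fin: "finite (carrier G)"
  shows "card {C \<in> rcosets H. \<forall>g\<in>H. C #> inv g = C} * card H = card (normalizer G H)"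
proof -
  let ?N = "normalizer G H"
  have Hc: "H \<subseteq> carrier G" and finH: "finite H"
    using H subgroup.subset fin finite_subset by blast+
  have N: "subgroup ?N G"
    using normalizer_imp_subgroup[OF Hc] .
  have HN: "subgroup H (G\<lparr>carrier := ?N\<rparr>)"
    using subgroup_incl[OF H N subgroup_subset_normalizer[OF H finH]] .
  have "{C \<in> rcosets H. \<forall>g\<in>H. C #> inv g = C} = rcosets\<^bsub>G\<lparr>carrier := ?N\<rparr>\<^esub> H"
  proof (intro equalityI subsetI)
    fix C assume "C \<in> {C \<in> rcosets H. \<forall>g\<in>H. C #> inv g = C}"
    then obtain a where "a \<in> carrier G" "C = H #> a" "\<forall>g\<in>H. H #> a #> inv g = H #> a"
      unfolding RCOSETS_def by blast
    then show "C \<in> rcosets\<^bsub>G\<lparr>carrier := ?N\<rparr>\<^esub> H"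
      using rcoset_fixed_iff_normalizer[OF H finH] unfolding RCOSETS_def r_coset_def by auto
  next
    fix C assume "C \<in> rcosets\<^bsub>G\<lparr>carrier := ?N\<rparr>\<^esub> H"
    then obtain a where "a \<in> ?N" "C = H #> a"
      unfolding RCOSETS_def r_coset_def by auto
    moreover have "a \<in> carrier G"
      using \<open>a \<in> ?N\<close> subgroup.mem_carrier[OF N] by blast
    ultimately show "C \<in> {C \<in> rcosets H. \<forall>g\<in>H. C #> inv g = C}"
      using rcoset_fixed_iff_normalizer[OF H finH] rcosetsI[OF Hc] by auto
  qed
  moreover have "card (rcosets\<^bsub>G\<lparr>carrier := ?N\<rparr>\<^esub> H) * card H = card ?N"
    using group.lagrange[OF subgroup.subgroup_is_group[OF N is_group] HN] by (simp add: order_def)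
  ultimately show ?thesis by simp
qed

lemma (in group) card_rcosets_cong_fixed_rcosets:
  assumes fin: "finite (carrier G)" and q: "Factorial_Ring.prime q"
    and Q: "subgroup Q G" "card Q = q ^ n"
  shows "[card (rcosets Q) = card {C \<in> rcosets Q. \<forall>g\<in>Q. C #> inv g = C}] (mod q)"
proof -
  have "group_action (G\<lparr>carrier := Q\<rparr>) (rcosets Q) (\<lambda>g. \<lambda>C\<in>rcosets Q. C #> inv g)"
    using group_action.induced_action[OF rcoset_action[OF Q(1)] Q(1)] .
  moreover have "finite (rcosets Q)"
    using fin subgroup.subset[OF Q(1)] unfolding RCOSETS_def
    by (auto intro: finite_subset[of _ "Pow (carrier G)"] r_coset_subset_G)
  moreover have "order (G\<lparr>carrier := Q\<rparr>) = q ^ n"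
    using Q(2) by (simp add: order_def)
  ultimately have "[card (rcosets Q) = card {C \<in> rcosets Q. \<forall>g\<in>carrier (G\<lparr>carrier := Q\<rparr>).
                      (\<lambda>C\<in>rcosets Q. C #> inv g) C = C}] (mod q)"
    by (rule group_action.card_cong_fixed_points[OF _ _ q])
  also have "{C \<in> rcosets Q. \<forall>g\<in>carrier (G\<lparr>carrier := Q\<rparr>). (\<lambda>C\<in>rcosets Q. C #> inv g) C = C}
      = {C \<in> rcosets Q. \<forall>g\<in>Q. C #> inv g = C}"
    by auto
  finally show ?thesis .
qed

lemma (in group) sylow_normal_if_pow_not_cong_one:
  assumes fin: "finite (carrier G)"
    and p: "Factorial_Ring.prime p" and q: "Factorial_Ring.prime q" and "p \<noteq> q"
    and ord: "order G = p ^ i * q ^ n" and Q: "subgroup Q G" "card Q = q ^ n"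
    and not_cong: "\<And>k. 0 < k \<Longrightarrow> k \<le> i \<Longrightarrow> \<not> [p ^ k = 1] (mod q)"
  shows "Q \<lhd> G"
proof -
  let ?N = "normalizer G Q"
  let ?Fix = "{C \<in> rcosets Q. \<forall>g\<in>Q. C #> inv g = C}"
  have Qc: "Q \<subseteq> carrier G" and finQ: "finite Q"
    using Q(1) subgroup.subset fin finite_subset by blast+
  have N: "subgroup ?N G"
    using normalizer_imp_subgroup[OF Qc] .
  have q_pos: "q > 0"
    using prime_gt_0_nat[OF q] .
  have "card (rcosets Q) = p ^ i"
    using lagrange[OF Q(1)] ord Q(2) q_pos by simp
  then have cong: "[p ^ i = card ?Fix] (mod q)"
    using card_rcosets_cong_fixed_rcosets[OF fin q Q] by simp
  have "card ?N dvd order G"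
    using lagrange[OF N] by (metis dvd_triv_right)
  then have "card ?Fix * q ^ n dvd p ^ i * q ^ n"
    using card_fixed_rcosets[OF Q(1) fin] Q(2) ord by simp
  then have "card ?Fix dvd p ^ i"
    using q_pos by simp
  then obtain j where j: "j \<le> i" "card ?Fix = p ^ j"
    using divides_primepow_nat[OF p] by blast
  then have "[p ^ j * p ^ (i - j) = p ^ j * 1] (mod q)"
    using cong by (simp flip: power_add)
  moreover have "coprime (p ^ j) q"
    using p q \<open>p \<noteq> q\<close> by (simp add: primes_coprime coprime_power_left_iff)
  ultimately have "[p ^ (i - j) = 1] (mod q)"
    using cong_mult_lcancel_nat by blast
  then have "j = i"
    using not_cong[of "i - j"] j(1) by fastforce
  then have "card ?N = order G"
    using card_fixed_rcosets[OF Q(1) fin] j Q(2) ord by simp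
  then have "?N = carrier G"
    using card_subset_eq[OF fin subgroup.subset[OF N]] by (simp add: order_def)
  then show ?thesis
    unfolding normal_inv_iff using Q(1) normalizer_iff_conj_closed[OF Q(1) finQ] by blast
qed

lemma pow_not_cong_one_if_gcd_lcm_upto:
  fixes p q m k :: nat
  assumes p: "Factorial_Ring.prime p" and q: "Factorial_Ring.prime q" and "p \<noteq> q"
    and k: "0 < k" "k \<le> m"
    and not_dvd: "\<not> q dvd p ^ gcd (lcm_upto m) (q - 1) - 1"
  shows "\<not> [p ^ k = 1] (mod q)"
proof
  assume "[p ^ k = 1] (mod q)"
  then have "ord q p dvd k"
    using ord_divides by blast
  also have "k dvd lcm_upto m"
    unfolding lcm_upto_def using k by (intro dvd_Lcm) auto
  finally have "ord q p dvd lcm_upto m" .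
  moreover have "\<not> q dvd p"
    using primes_dvd_imp_eq[OF q p] \<open>p \<noteq> q\<close> by auto
  then have "ord q p dvd q - 1"
    using fermat_theorem[OF q] ord_divides by blast
  ultimately have "ord q p dvd gcd (lcm_upto m) (q - 1)"
    by (rule gcd_greatest)
  then have "[p ^ gcd (lcm_upto m) (q - 1) = 1] (mod q)"
    using ord_divides by blast
  then show False
    using not_dvd cong_to_1_nat by blast
qed

lemma (in group) exists_centralizing_elem_of_normal_subgroup:
  assumes fin: "finite (carrier G)" and Q: "Q \<lhd> G"
    and P: "subgroup P G" "card P = p ^ i" and p: "Factorial_Ring.prime p"
    and not_cong: "\<not> [card Q = 1] (mod p)"
  shows "\<exists>y\<in>Q. y \<noteq> \<one> \<and> (\<forall>g\<in>P. g \<otimes> y = y \<otimes> g)"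
proof -
  let ?conj = "\<lambda>g. \<lambda>h\<in>carrier G. g \<otimes> h \<otimes> inv g"
  let ?Fix = "{y \<in> Q. \<forall>g\<in>P. g \<otimes> y \<otimes> inv g = y}"
  have Qc: "Q \<subseteq> carrier G"
    using Q normal_imp_subgroup subgroup.subset by blast
  have "group_action (G\<lparr>carrier := P\<rparr>) Q (\<lambda>g. restrict (?conj g) Q)"
  proof (rule group_action_restrict[OF group_action.induced_action[OF action_by_conjugation P(1)] Qc])
    show "?conj g y \<in> Q" if "g \<in> carrier (G\<lparr>carrier := P\<rparr>)" "y \<in> Q" for g y
      using that Qc subgroup.mem_carrier[OF P(1)] normal.inv_op_closed2[OF Q] by auto
  qed
  moreover have "finite Q"
    using fin Qc finite_subset by blast
  moreover have "order (G\<lparr>carrier := P\<rparr>) = p ^ i"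
    using P(2) by (simp add: order_def)
  ultimately have "[card Q = card {y \<in> Q. \<forall>g\<in>carrier (G\<lparr>carrier := P\<rparr>).
                      restrict (?conj g) Q y = y}] (mod p)"
    by (rule group_action.card_cong_fixed_points[OF _ _ p])
  also have "{y \<in> Q. \<forall>g\<in>carrier (G\<lparr>carrier := P\<rparr>). restrict (?conj g) Q y = y} = ?Fix"
    using Qc by auto
  finally have "?Fix \<noteq> {\<one>}"
    using not_cong by auto
  moreover have "\<one> \<in> ?Fix"
    using Q normal_imp_subgroup subgroup.one_closed subgroup.mem_carrier[OF P(1)] by fastforce
  ultimately obtain y where y: "y \<in> ?Fix" "y \<noteq> \<one>"
    by blast
  have "g \<otimes> y = y \<otimes> g" if g: "g \<in> P" for g
  proof -
    have gc: "g \<in> carrier G" and yc: "y \<in> carrier G"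
      using g y(1) Qc subgroup.mem_carrier[OF P(1)] by auto
    have "g \<otimes> y = (g \<otimes> y \<otimes> inv g) \<otimes> g"
      using gc yc by (simp add: m_assoc)
    then show ?thesis
      using y(1) g by simp
  qed
  then show ?thesis
    using y by blast
qed

lemma (in group) ord_dvd_card_subgroup:
  assumes H: "subgroup H G" and x: "x \<in> H"
  shows "ord x dvd card H"
proof -
  interpret H: group "G\<lparr>carrier := H\<rparr>"
    using subgroup.subgroup_is_group[OF H is_group] .
  have "x [^] card H = \<one>"
    using H.pow_order_eq_1[of x] x nat_pow_consistent[of x _ H] by (simp add: order_def)
  then show ?thesis
    using pow_eq_id subgroup.mem_carrier[OF H x] by blast
qed

lemma (in group) exists_pow_ord_prime:
  assumes x: "x \<in> carrier G" "x \<noteq> \<one>" and r: "Factorial_Ring.prime r"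
    and ord_dvd: "ord x dvd r ^ k"
  shows "\<exists>c. ord (x [^] (r ^ c)) = r"
proof -
  obtain b where b: "ord x = r ^ b"
    using divides_primepow_nat[OF r] ord_dvd by blast
  then obtain c where c: "b = Suc c"
    using ord_eq_1[OF x(1)] x(2) by (cases b) auto
  have "ord (x [^] (r ^ c)) = ord x div r ^ c"
    using ord_pow[OF x(1)] b c r prime_gt_0_nat by (simp add: le_imp_power_dvd)
  also have "\<dots> = r"
    using b c r prime_gt_0_nat by simp
  finally show ?thesis by blast
qed

lemma (in group) nat_pow_commute:
  assumes comm: "x \<otimes> y = y \<otimes> x" and x: "x \<in> carrier G" and y: "y \<in> carrier G"
  shows "x [^] (a::nat) \<otimes> y [^] (b::nat) = y [^] b \<otimes> x [^] a"
  using group_commutes_pow[OF group_commutes_pow[OF comm x y, symmetric] y nat_pow_closed[OF x]]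
  by simp

lemma (in group) ord_dvd_ord_mult_if_coprime:
  assumes comm: "x \<otimes> y = y \<otimes> x" and x: "x \<in> carrier G" and y: "y \<in> carrier G"
    and cop: "coprime (ord x) (ord y)"
  shows "ord x dvd ord (x \<otimes> y)"
proof -
  let ?n = "ord (x \<otimes> y) * ord y"
  have "x [^] ?n = x [^] ?n \<otimes> y [^] ?n"
    using x y pow_eq_id[OF y] by simp
  also have "\<dots> = (x \<otimes> y) [^] ?n"
    using pow_mult_distrib[OF comm x y] by simp
  also have "\<dots> = \<one>"
    using pow_eq_id[of "x \<otimes> y"] x y by simp
  finally have "ord x dvd ?n"
    using pow_eq_id[OF x] by simp
  then show ?thesis
    using cop coprime_dvd_mult_left_iff by blast
qed

lemma (in group) ord_mult_coprime:
  assumes comm: "x \<otimes> y = y \<otimes> x" and x: "x \<in> carrier G" and y: "y \<in> carrier G"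
    and cop: "coprime (ord x) (ord y)"
  shows "ord (x \<otimes> y) = ord x * ord y"
proof (rule dvd_antisym)
  show "ord (x \<otimes> y) dvd ord x * ord y"
    using ord_mul_divides[OF comm x y] .
  have "ord y dvd ord (x \<otimes> y)"
    using ord_dvd_ord_mult_if_coprime[OF comm[symmetric] y x] cop comm
    by (simp add: coprime_commute)
  then show "ord x * ord y dvd ord (x \<otimes> y)"
    using ord_dvd_ord_mult_if_coprime[OF assms] cop by (simp add: divides_mult)
qed

lemma (in group) exists_comm_subgroup_card_ord:
  assumes "g \<in> carrier G"
  shows "\<exists>H. subgroup H G \<and> comm_group (G\<lparr>carrier := H\<rparr>) \<and> card H = ord g"
proof (intro exI conjI)
  show "subgroup (generate G {g}) G"
    using assms generate_is_subgroup by simp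
  show "card (generate G {g}) = ord g"
    using generate_pow_card[OF assms] by simp
  have "subgroup_generated G {g} = G\<lparr>carrier := generate G {g}\<rparr>"
    using assms unfolding subgroup_generated_def by (simp add: Int_absorb1)
  then show "comm_group (G\<lparr>carrier := generate G {g}\<rparr>)"
    using group.cyclic_imp_abelian_group[OF group_subgroup_generated cyclic_group_generated[of g]]
    by simp
qed

lemma (in group) exists_comm_subgroup_card_mult:
  assumes comm: "x \<otimes> y = y \<otimes> x" and x: "x \<in> carrier G" and y: "y \<in> carrier G"
    and cop: "coprime (ord x) (ord y)"
  shows "\<exists>H. subgroup H G \<and> comm_group (G\<lparr>carrier := H\<rparr>) \<and> card H = ord x * ord y"
  using exists_comm_subgroup_card_ord[of "x \<otimes> y"] ord_mult_coprime[OF assms] x y by simp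

theorem theorem2p4:
  fixes G (structure) and p q m n i :: nat
  assumes "group G" and "finite (carrier G)"
    and "Factorial_Ring.prime p" and "Factorial_Ring.prime q" and "p \<noteq> q"
    and "p dvd order G" and "q dvd order G"
    and "m > 0" and "n > 0"
    and "1 \<le> i" and "i \<le> m"
    and "order G = p ^ i * q ^ n"
    and "\<not> p dvd (q ^ n - 1)"
    and "\<not> q dvd (p ^ (gcd (lcm_upto m) (q - 1)) - 1)"
  shows "\<exists>H. subgroup H G \<and> comm_group (G\<lparr>carrier := H\<rparr>) \<and> card H = p * q"
proof -
  interpret G: group G by fact
  note p = \<open>Factorial_Ring.prime p\<close> and q = \<open>Factorial_Ring.prime q\<close>
  obtain Q where Q: "subgroup Q G" "card Q = q ^ n"
    using sylow_thm[OF q assms(1) _ assms(2), of n "p ^ i"] assms(12) by (auto simp: mult.commute)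
  obtain P where P: "subgroup P G" "card P = p ^ i"
    using sylow_thm[OF p assms(1,12,2)] by blast
  have "Q \<lhd> G"
    using G.sylow_normal_if_pow_not_cong_one[OF assms(2) p q assms(5,12) Q]
      pow_not_cong_one_if_gcd_lcm_upto[OF p q assms(5) _ _ assms(14)] assms(11) by simp
  moreover have "\<not> [card Q = 1] (mod p)"
    using assms(13) cong_to_1_nat unfolding Q(2) by blast
  ultimately obtain y where y: "y \<in> Q" "y \<noteq> \<one>" "\<forall>g\<in>P. g \<otimes> y = y \<otimes> g"
    using G.exists_centralizing_elem_of_normal_subgroup[OF assms(2) _ P p] by blast
  have "P \<noteq> {\<one>}"
    using P(2) assms(10) prime_gt_1_nat[OF p] one_less_power[of p i] by auto
  then obtain x where x: "x \<in> P" "x \<noteq> \<one>"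
    using subgroup.one_closed[OF P(1)] by blast
  have xc: "x \<in> carrier G" and yc: "y \<in> carrier G"
    using subgroup.mem_carrier[OF P(1) x(1)] subgroup.mem_carrier[OF Q(1) y(1)] .
  obtain a where a: "G.ord (x [^] (p ^ a)) = p"
    using G.exists_pow_ord_prime[OF xc x(2) p G.ord_dvd_card_subgroup[OF P(1) x(1), unfolded P(2)]] ..
  obtain b where b: "G.ord (y [^] (q ^ b)) = q"
    using G.exists_pow_ord_prime[OF yc y(2) q G.ord_dvd_card_subgroup[OF Q(1) y(1), unfolded Q(2)]] ..
  have "x \<otimes> y = y \<otimes> x"
    using y(3) x(1) by blast
  then show ?thesis
    using G.exists_comm_subgroup_card_mult[OF G.nat_pow_commute, of x y "p ^ a" "q ^ b"]
      a b xc yc primes_coprime[OF p q assms(5)] by simp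
qed

end
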